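(* Let $\mathcal{M}=\langle\mathcal{X},X_W,\Phi,\mathcal{B}\rangle$ be a system of constraints with $\mathcal{B}=\langle V,F,E\rangle$, let $\langle T_I,T_C,T_O\rangle$ be the coarse decomposition of the subgraph of $\mathcal{B}$ induced by $(V\setminus W)\cup F$ and $\mathrm{CO}(\mathcal{B})=\langle\mathcal{V},\mathcal{E}\rangle$ the causal ordering graph. Assume $\mathcal{M}$ is maximally uniquely solvable w.r.t. $\mathrm{CO}(\mathcal{B})$ and let $X^*$ be a solution of $\mathcal{M}$. Let $S_F\subseteq(T_C\cup T_O)\cap F$ and $S_V\subseteq(T_C\cup T_O)\cap(V\setminus W)$ be such that $S_F\cup S_V\in\mathcal{V}$, let $\xi_{S_V}\in\mathcal{X}_{S_V}$, and let $X'$ be a solution of the intervened system $\mathcal{M}_{\mathrm{do}(S_F,S_V,\xi_{S_V})}$. If there is no directed path in $\mathrm{CO}(\mathcal{B})$ from any $x\in S_V$ to $v\in(T_C\cup T_O)\cap V$, then $X^*_v=X'_v$ almost surely. (If there is $x\in S_V$ with a directed path from $x$ to $v$ in $\mathrm{CO}(\mathcal{B})$, then $X^*_v$ may have a different distribution than $X'_v$.)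
   Context: System of constraints $\langle\mathcal{X},X_W,\Phi,\mathcal{B}\rangle$: $\mathcal{X}=\bigotimes_{v\in V}\mathcal{X}_v$ standard measurable spaces; $W\subseteq V$ and $X_W=(X_w)_{w\in W}$ independent random variables; $\Phi=(\Phi_f)_{f\in F}$, $\Phi_f=\langle\phi_f,c_f,V(f)\rangle$, $V(f)\subseteq V$, $c_f$ a constant in a standard measurable space, $\phi_f:\mathcal{X}_{V(f)}\to\mathcal{Y}$ measurable; $\mathcal{B}=\langle V,F,E\rangle$ with $E=\{(f-v):v\in V(f)\}$; $V(S_F)=\bigcup_{f\in S_F}V(f)$. A solution is a measurable $g:\mathcal{X}_W\to\mathcal{X}_{V\setminus W}$ with $\phi_f(g_{V(f)\setminus W}(X_W),X_{V(f)\cap W})=c_f$ for all $f$ a.s. (the solution random vector has components $g(X_W)$). Solvable w.r.t. $S_F\subseteq F$, $S_V\subseteq V(S_F)\setminus W$: there is a measurable $g_{S_V}:\mathcal{X}_{V(S_F)\setminus S_V}\to\mathcal{X}_{S_V}$ such that a.s., for all $x_{V(S_F)\setminus W}$, $x_{S_V}=g_{S_V}(x_{V(S_F)\setminus(S_V\cup W)},X_{V(S_F)\cap W})$ implies $\phi_f(x_{V(f)\setminus W},X_{V(f)\cap W})=c_f$ for all $f\in S_F$; uniquely solvable if the converse holds as well. Perfect intervention: for a single pair $(f,v)$ with $v\in V\setminus W$ and $\xi_v\in\mathcal{X}_v$, $\mathcal{M}_{\mathrm{do}(f,v,\xi_v)}$ replaces $\Phi_f$ by $\langle x_v\mapsto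 x_v,\ \xi_v,\ \{v\}\rangle$ and replaces $\mathcal{B}$ by $\langle V,F,E'\rangle$ with $E'$ = edges of $E$ not incident to $f$, plus $(v-f)$. For tuples $S_F=(f_1,\dots,f_n)$, $S_V=(v_1,\dots,v_n)$ (enumerations of the sets), $\mathrm{do}(S_F,S_V,\xi_{S_V})$ performs these interventions for all pairs $(f_i,v_i)$. Graph notions: $\mathrm{adj}(X)$ = neighbours; $F'\subseteq F$ self-contained if $|F'|=|\mathrm{adj}(F')|$ and $|F''|\le|\mathrm{adj}(F'')|$ for $F''\subseteq F'$; minimal self-contained = non-empty self-contained with no non-empty strict self-contained subset. For a maximum matching $M$, an alternating path is a sequence of distinct vertices (possibly one) with consecutive ones adjacent and edges alternating between not in $M$ and in $M$; coarse decomposition: $T_I$ = vertices joined by an alternating path to an unmatched variable vertex, $T_O$ = to an unmatched constraint vertex, $T_C$ = the rest. $\mathrm{CO}(\mathcal{B})=\langle\mathcal{V},\mathcal{E}\rangle$ is a partition of $V\cup F$ into clusters with edges $x\to C$ ($\mathrm{cl}(x)$ the cluster of $x$): with $\mathcal{B}'$ the subgraph induced by $(V\setminus W)\cup F$ and $\mathcal{B}_I,\mathcal{B}_C,\mathcal{B}_O$ the subgraphs induced by $T_I,T_C,T_O$: on $\mathcal{B}_C$, while the current graph $\mathcal{B}''$ is non-null, choose a minimal self-contained $S'_F$ of $\mathcal{B}''$, form cluster $C=S'_F\cup\mathrm{adj}_{\mathcal{B}''}(S'_F)$, add edges $v\to C$ for $v\in\mathrm{adj}_{\mathcal{B}_C}(S'_F)\setminus\mathrm{adj}_{\mathcal{B}''}(S'_F)$,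 delete $C$. Other clusters: connected components of $\mathcal{B}_I$ and $\mathcal{B}_O$, and $\{w\}$, $w\in W$. Further edges: $v\to\mathrm{cl}(f)$ for each edge $(v-f)$ with $v\in(T_O\cup T_C)\cap V$, $f\in T_I\cap F$, or $v\in T_O\cap V$, $f\in T_C\cap F$; and $w\to\mathrm{cl}(f)$ for $w\in W$, $f\in\mathrm{adj}_{\mathcal{B}}(w)$. A directed path from $x$ to $y$ exists if $\mathrm{cl}(x)=\mathrm{cl}(y)$ or there are clusters $V_1=\mathrm{cl}(x),\dots,V_k=\mathrm{cl}(y)$ with, for each $i<k$, some $z_i\in V_i$ and $(z_i\to V_{i+1})\in\mathcal{E}$. Maximally uniquely solvable w.r.t. $\mathrm{CO}(\mathcal{B})$: uniquely solvable w.r.t. $S\cap F$, $S\cap V$ for every cluster $S$ with $S\cap W=\emptyset$, $S\cap T_I=\emptyset$, and solvable w.r.t. $T_I\cap F$ and $(T_I\cap V)\setminus W$. *)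

theory Defs
  imports "HOL-Probability.Probability"
begin

text \<open>Variables have index type 'v, constraints index type 'f; all values (of variables and
of constraint outputs/constants) live in one ambient type 'a, each variable / constraint
carrying its own measurable space on 'a.  Configurations x_A are extensional functions
in the product space PiM A (xsp S).\<close>

record ('v, 'f, 'a) csys =
  vars  :: "'v set"
  cons  :: "'f set"
  exo   :: "'v set"
  xsp   :: "'v \<Rightarrow> 'a measure"
  scope :: "'f \<Rightarrow> 'v set"
  phi   :: "'f \<Rightarrow> ('v \<Rightarrow> 'a) \<Rightarrow> 'a"    (* phi_f, applied to x_{V(f)} *)
  cst   :: "'f \<Rightarrow> 'a"
  cod   :: "'f \<Rightarrow> 'a measure"

definition standard_space :: "'a measure \<Rightarrow> bool" where
  "standard_space M \<longleftrightarrow> (\<exists>(B::real set) f g. B \<in> sets borel \<and>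
      f \<in> M \<rightarrow>\<^sub>M restrict_space borel B \<and> g \<in> restrict_space borel B \<rightarrow>\<^sub>M M \<and>
      (\<forall>x\<in>space M. g (f x) = x) \<and> (\<forall>y\<in>B. f (g y) = y))"

definition wf_csys :: "('v,'f,'a) csys \<Rightarrow> 'o measure \<Rightarrow> ('v \<Rightarrow> 'o \<Rightarrow> 'a) \<Rightarrow> bool" where
  "wf_csys S P X \<longleftrightarrow>
     finite (vars S) \<and> finite (cons S) \<and> exo S \<subseteq> vars S \<and>
     (\<forall>v\<in>vars S. standard_space (xsp S v)) \<and>
     (\<forall>f\<in>cons S. scope S f \<subseteq> vars S \<and> standard_space (cod S f) \<and>
         cst S f \<in> space (cod S f) \<and>
         phi S f \<in> PiM (scope S f) (xsp S) \<rightarrow>\<^sub>M cod S f) \<and>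
     prob_space P \<and>
     (\<forall>w\<in>exo S. X w \<in> P \<rightarrow>\<^sub>M xsp S w) \<and>
     prob_space.indep_vars P (xsp S) X (exo S)"

definition mergeX :: "('v,'f,'a) csys \<Rightarrow> ('v \<Rightarrow> 'o \<Rightarrow> 'a) \<Rightarrow> 'o \<Rightarrow> ('v \<Rightarrow> 'a) \<Rightarrow> ('v \<Rightarrow> 'a)" where
  "mergeX S X \<omega> x = (\<lambda>v. if v \<in> exo S then X v \<omega> else x v)"

definition solvec :: "('v,'f,'a) csys \<Rightarrow> ('v \<Rightarrow> 'o \<Rightarrow> 'a) \<Rightarrow> (('v \<Rightarrow> 'a) \<Rightarrow> ('v \<Rightarrow> 'a)) \<Rightarrow> 'o \<Rightarrow> ('v \<Rightarrow> 'a)" where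
  "solvec S X g \<omega> = (\<lambda>v\<in>vars S. if v \<in> exo S then X v \<omega> else g (\<lambda>w\<in>exo S. X w \<omega>) v)"

definition is_solution :: "('v,'f,'a) csys \<Rightarrow> 'o measure \<Rightarrow> ('v \<Rightarrow> 'o \<Rightarrow> 'a) \<Rightarrow> (('v \<Rightarrow> 'a) \<Rightarrow> ('v \<Rightarrow> 'a)) \<Rightarrow> bool" where
  "is_solution S P X g \<longleftrightarrow>
     g \<in> PiM (exo S) (xsp S) \<rightarrow>\<^sub>M PiM (vars S - exo S) (xsp S) \<and>
     (AE \<omega> in P. \<forall>f\<in>cons S. phi S f (restrict (solvec S X g \<omega>) (scope S f)) = cst S f)"

definition VS :: "('v,'f,'a) csys \<Rightarrow> 'f set \<Rightarrow> 'v set" where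
  "VS S Fs = (\<Union>f\<in>Fs. scope S f)"

text \<open>Solvability w.r.t. S_F (Fs), S_V (Vs).  The endogenous configuration x ranges over
X_{(V(S_F) \<union> S_V)\W}, which is X_{V(S_F)\W} whenever S_V \<subseteq> V(S_F)\W.\<close>
definition solv_cond :: "('v,'f,'a) csys \<Rightarrow> ('v \<Rightarrow> 'o \<Rightarrow> 'a) \<Rightarrow> 'f set \<Rightarrow> 'v set
     \<Rightarrow> (('v \<Rightarrow> 'a) \<Rightarrow> ('v \<Rightarrow> 'a)) \<Rightarrow> 'o \<Rightarrow> ('v \<Rightarrow> 'a) \<Rightarrow> bool \<times> bool" where
  "solv_cond S X Fs Vs g \<omega> x =
     (restrict x Vs = g (restrict (mergeX S X \<omega> x) (VS S Fs - Vs)),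
      (\<forall>f\<in>Fs. phi S f (restrict (mergeX S X \<omega> x) (scope S f)) = cst S f))"

definition solvable :: "('v,'f,'a) csys \<Rightarrow> 'o measure \<Rightarrow> ('v \<Rightarrow> 'o \<Rightarrow> 'a) \<Rightarrow> 'f set \<Rightarrow> 'v set \<Rightarrow> bool" where
  "solvable S P X Fs Vs \<longleftrightarrow> (\<exists>g. g \<in> PiM (VS S Fs - Vs) (xsp S) \<rightarrow>\<^sub>M PiM Vs (xsp S) \<and>
     (AE \<omega> in P. \<forall>x\<in>space (PiM ((VS S Fs \<union> Vs) - exo S) (xsp S)).
        fst (solv_cond S X Fs Vs g \<omega> x) \<longrightarrow> snd (solv_cond S X Fs Vs g \<omega> x)))"

definition uniquely_solvable :: "('v,'f,'a) csys \<Rightarrow> 'o measure \<Rightarrow> ('v \<Rightarrow> 'o \<Rightarrow> 'a) \<Rightarrow> 'f set \<Rightarrow> 'v set \<Rightarrow> bool" where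
  "uniquely_solvable S P X Fs Vs \<longleftrightarrow> (\<exists>g. g \<in> PiM (VS S Fs - Vs) (xsp S) \<rightarrow>\<^sub>M PiM Vs (xsp S) \<and>
     (AE \<omega> in P. \<forall>x\<in>space (PiM ((VS S Fs \<union> Vs) - exo S) (xsp S)).
        fst (solv_cond S X Fs Vs g \<omega> x) \<longleftrightarrow> snd (solv_cond S X Fs Vs g \<omega> x)))"

text \<open>Perfect intervention do(S_F, S_V, xi): sigma pairs f_i with v_i (an enumeration of both
sets is the same as a bijection S_F -> S_V).  The bipartite graph of a system is determined by
the scopes V(f), so replacing V(f_i) by {v_i} realises the graph E'.\<close>
definition do_sys :: "('v,'f,'a) csys \<Rightarrow> 'f set \<Rightarrow> ('f \<Rightarrow> 'v) \<Rightarrow> ('v \<Rightarrow> 'a) \<Rightarrow> ('v,'f,'a) csys" where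
  "do_sys S Fs \<sigma> \<xi> = S\<lparr>
     scope := (\<lambda>f. if f \<in> Fs then {\<sigma> f} else scope S f),
     phi := (\<lambda>f. if f \<in> Fs then (\<lambda>x. x (\<sigma> f)) else phi S f),
     cst := (\<lambda>f. if f \<in> Fs then \<xi> (\<sigma> f) else cst S f),
     cod := (\<lambda>f. if f \<in> Fs then xsp S (\<sigma> f) else cod S f)\<rparr>"

type_synonym ('v, 'f) node = "'v + 'f"

definition adjB :: "('v,'f,'a) csys \<Rightarrow> ('v,'f) node \<Rightarrow> ('v,'f) node \<Rightarrow> bool" where
  "adjB S a b \<longleftrightarrow> (\<exists>v f. f \<in> cons S \<and> v \<in> vars S \<and> v \<in> scope S f \<and>
      ((a = Inl v \<and> b = Inr f) \<or> (a = Inr f \<and> b = Inl v)))"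

definition Vp :: "('v,'f,'a) csys \<Rightarrow> ('v,'f) node set" where
  "Vp S = Inl ` (vars S - exo S) \<union> Inr ` cons S"

definition nbrs :: "('v,'f,'a) csys \<Rightarrow> ('v,'f) node set \<Rightarrow> ('v,'f) node set \<Rightarrow> ('v,'f) node set" where
  "nbrs S R A = {b\<in>R. \<exists>a\<in>A. adjB S a b}"

definition matching :: "('v,'f,'a) csys \<Rightarrow> ('f \<times> 'v) set \<Rightarrow> bool" where
  "matching S M \<longleftrightarrow>
     M \<subseteq> {(f, v). f \<in> cons S \<and> v \<in> vars S - exo S \<and> v \<in> scope S f} \<and>
     (\<forall>(f, v)\<in>M. \<forall>(f', v')\<in>M. f = f' \<longleftrightarrow> v = v')"

definition max_matching :: "('v,'f,'a) csys \<Rightarrow> ('f \<times> 'v) set \<Rightarrow> bool" where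
  "max_matching S M \<longleftrightarrow> matching S M \<and> (\<forall>M'. matching S M' \<longrightarrow> card M' \<le> card M)"

definition matched :: "('f \<times> 'v) set \<Rightarrow> ('v,'f) node \<Rightarrow> bool" where
  "matched M x \<longleftrightarrow> (\<exists>f v. (f, v) \<in> M \<and> (x = Inl v \<or> x = Inr f))"

definition inM :: "('f \<times> 'v) set \<Rightarrow> ('v,'f) node \<Rightarrow> ('v,'f) node \<Rightarrow> bool" where
  "inM M a b \<longleftrightarrow> (\<exists>f v. (f, v) \<in> M \<and> ((a = Inl v \<and> b = Inr f) \<or> (a = Inr f \<and> b = Inl v)))"

definition alt_path :: "('v,'f,'a) csys \<Rightarrow> ('f \<times> 'v) set \<Rightarrow> ('v,'f) node list \<Rightarrow> bool" where
  "alt_path S M p \<longleftrightarrow> p \<noteq> [] \<and> distinct p \<and> set p \<subseteq> Vp S \<and>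
     (\<forall>i. Suc i < length p \<longrightarrow> adjB S (p ! i) (p ! Suc i) \<and>
                                 (inM M (p ! i) (p ! Suc i) \<longleftrightarrow> odd i))"

definition T_I :: "('v,'f,'a) csys \<Rightarrow> ('f \<times> 'v) set \<Rightarrow> ('v,'f) node set" where
  "T_I S M = {x. \<exists>p u. alt_path S M p \<and> u \<in> vars S - exo S \<and> \<not> matched M (Inl u) \<and>
                      hd p = Inl u \<and> last p = x}"

definition T_O :: "('v,'f,'a) csys \<Rightarrow> ('f \<times> 'v) set \<Rightarrow> ('v,'f) node set" where
  "T_O S M = {x. \<exists>p f. alt_path S M p \<and> f \<in> cons S \<and> \<not> matched M (Inr f) \<and>
                      hd p = Inr f \<and> last p = x}"

definition T_C :: "('v,'f,'a) csys \<Rightarrow> ('f \<times> 'v) set \<Rightarrow> ('v,'f) node set" where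
  "T_C S M = Vp S - T_I S M - T_O S M"

definition self_contained :: "('v,'f,'a) csys \<Rightarrow> ('v,'f) node set \<Rightarrow> 'f set \<Rightarrow> bool" where
  "self_contained S R Fs \<longleftrightarrow> Inr ` Fs \<subseteq> R \<and>
     card Fs = card (nbrs S R (Inr ` Fs)) \<and>
     (\<forall>G\<subseteq>Fs. card G \<le> card (nbrs S R (Inr ` G)))"

definition min_self_contained :: "('v,'f,'a) csys \<Rightarrow> ('v,'f) node set \<Rightarrow> 'f set \<Rightarrow> bool" where
  "min_self_contained S R Fs \<longleftrightarrow> Fs \<noteq> {} \<and> self_contained S R Fs \<and>
     \<not> (\<exists>G. G \<noteq> {} \<and> G \<subset> Fs \<and> self_contained S R G)"

definition clusterOf :: "('v,'f,'a) csys \<Rightarrow> ('v,'f) node set \<Rightarrow> 'f set \<Rightarrow> ('v,'f) node set" where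
  "clusterOf S R Fs = Inr ` Fs \<union> nbrs S R (Inr ` Fs)"

text \<open>A run of the clustering algorithm on B_C: the list of chosen minimal self-contained sets,
starting from the current vertex set R; the run must end with the null graph.\<close>
fun co_run :: "('v,'f,'a) csys \<Rightarrow> ('v,'f) node set \<Rightarrow> 'f set list \<Rightarrow> bool" where
  "co_run S R [] \<longleftrightarrow> R = {}"
| "co_run S R (Fs # rest) \<longleftrightarrow> min_self_contained S R Fs \<and> co_run S (R - clusterOf S R Fs) rest"

text \<open>Clusters produced by a run, each with the set of vertices v having an edge v -> C
(TC is the vertex set of B_C).\<close>
fun co_clusters :: "('v,'f,'a) csys \<Rightarrow> ('v,'f) node set \<Rightarrow> ('v,'f) node set \<Rightarrow> 'f set list
     \<Rightarrow> (('v,'f) node set \<times> ('v,'f) node set) list" where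
  "co_clusters S TC R [] = []"
| "co_clusters S TC R (Fs # rest) =
     (clusterOf S R Fs, nbrs S TC (Inr ` Fs) - nbrs S R (Inr ` Fs))
       # co_clusters S TC (R - clusterOf S R Fs) rest"

definition components :: "('v,'f,'a) csys \<Rightarrow> ('v,'f) node set \<Rightarrow> ('v,'f) node set set" where
  "components S T = (\<lambda>x. {y. (x, y) \<in> {(a, b). a \<in> T \<and> b \<in> T \<and> adjB S a b}\<^sup>*}) ` T"

definition CO_clusters :: "('v,'f,'a) csys \<Rightarrow> ('f \<times> 'v) set \<Rightarrow> 'f set list \<Rightarrow> ('v,'f) node set set" where
  "CO_clusters S M run =
     set (map fst (co_clusters S (T_C S M) (T_C S M) run)) \<union>
     components S (T_I S M) \<union> components S (T_O S M) \<union>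
     (\<lambda>w. {Inl w}) ` exo S"

definition CO_edges :: "('v,'f,'a) csys \<Rightarrow> ('f \<times> 'v) set \<Rightarrow> 'f set list \<Rightarrow> (('v,'f) node \<times> ('v,'f) node set) set" where
  "CO_edges S M run =
     {(z, C) | z C In. (C, In) \<in> set (co_clusters S (T_C S M) (T_C S M) run) \<and> z \<in> In} \<union>
     {(Inl v, C) | v f C. C \<in> CO_clusters S M run \<and> Inr f \<in> C \<and> adjB S (Inl v) (Inr f) \<and>
        ((Inl v \<in> T_O S M \<union> T_C S M \<and> Inr f \<in> T_I S M) \<or>
         (Inl v \<in> T_O S M \<and> Inr f \<in> T_C S M))} \<union>
     {(Inl w, C) | w f C. w \<in> exo S \<and> C \<in> CO_clusters S M run \<and> Inr f \<in> C \<and> adjB S (Inl w) (Inr f)}"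

definition dpath :: "('v,'f,'a) csys \<Rightarrow> ('f \<times> 'v) set \<Rightarrow> 'f set list \<Rightarrow> ('v,'f) node \<Rightarrow> ('v,'f) node \<Rightarrow> bool" where
  "dpath S M run x y \<longleftrightarrow>
     (\<exists>C\<in>CO_clusters S M run. \<exists>D\<in>CO_clusters S M run. x \<in> C \<and> y \<in> D \<and>
        (C, D) \<in> {(C1, C2). C1 \<in> CO_clusters S M run \<and> C2 \<in> CO_clusters S M run \<and>
                            (\<exists>z\<in>C1. (z, C2) \<in> CO_edges S M run)}\<^sup>*)"

definition max_uniquely_solvable :: "('v,'f,'a) csys \<Rightarrow> 'o measure \<Rightarrow> ('v \<Rightarrow> 'o \<Rightarrow> 'a)
     \<Rightarrow> ('f \<times> 'v) set \<Rightarrow> 'f set list \<Rightarrow> bool" where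
  "max_uniquely_solvable S P X M run \<longleftrightarrow>
     (\<forall>C\<in>CO_clusters S M run. C \<inter> Inl ` exo S = {} \<and> C \<inter> T_I S M = {} \<longrightarrow>
        uniquely_solvable S P X {f. Inr f \<in> C} {v. Inl v \<in> C}) \<and>
     solvable S P X {f. Inr f \<in> T_I S M} ({v. Inl v \<in> T_I S M} - exo S)"

end

theory Submission
  imports Defs
begin

(* Follow the causal ordering. Since T_O is closed under passing from a constraint to its
   endogenous variables, the components of T_O only have exogenous inputs, and every cluster of
   B_C only receives inputs from T_O and from clusters chosen earlier in the run. A cluster that
   cannot be reached from S_V contains no intervened constraint, because the clusters are
   pairwise disjoint (T_I and T_O are disjoint as a maximum matching has no augmenting path).
   Both solutions therefore satisfy the constraints of such a cluster, and its unique solvability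
   forces them to agree on it once they agree on its inputs. Induction along the run yields
   agreement at every unreachable variable of T_C and T_O. *)

section \<open>Matchings and alternating paths\<close>

lemma adjB_sym: "adjB S a b \<Longrightarrow> adjB S b a"
  by (auto simp: adjB_def)

lemma adjB_isl: "adjB S a b \<Longrightarrow> isl b \<longleftrightarrow> \<not> isl a"
  by (auto simp: adjB_def)

lemma inM_sym: "inM M a b \<Longrightarrow> inM M b a"
  by (auto simp: inM_def)

lemma inM_unique: "matching S M \<Longrightarrow> inM M a b \<Longrightarrow> inM M a c \<Longrightarrow> b = c"
  unfolding inM_def matching_def by fastforce

lemma inM_imp_matched: "inM M a b \<Longrightarrow> matched M a"
  by (auto simp: inM_def matched_def)

lemma matching_finite:
  "matching S M \<Longrightarrow> finite (cons S) \<Longrightarrow> finite (vars S) \<Longrightarrow> finite M"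
  unfolding matching_def by (auto intro: finite_subset[of _ "cons S \<times> vars S"])

lemma matched_insert:
  "matched (insert (f, u) M) x \<longleftrightarrow> x = Inl u \<or> x = Inr f \<or> matched M x"
  by (auto simp: matched_def)

lemma matched_remove:
  assumes "matching S M" "(f, u) \<in> M"
  shows "matched (M - {(f, u)}) x \<longleftrightarrow> matched M x \<and> x \<noteq> Inl u \<and> x \<noteq> Inr f"
  using assms unfolding matching_def matched_def by fast

lemma matching_remove: "matching S M \<Longrightarrow> matching S (M - D)"
  unfolding matching_def by blast

lemma matching_insert:
  assumes "matching S M" "adjB S (Inl u) (Inr f)" "u \<notin> exo S"
    and "\<not> matched M (Inl u)" "\<not> matched M (Inr f)"
  shows "matching S (insert (f, u) M)"
  using assms unfolding matching_def matched_def adjB_def by fast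

(* Index-free form of the parity condition in alt_path: on a path starting at x, an edge lies in M
   iff it leads to a vertex on the side of x. Paths can then be cut, extended and reversed. *)
definition alt_edge ::
    "('v,'f,'a) csys \<Rightarrow> ('f \<times> 'v) set \<Rightarrow> ('v,'f) node \<Rightarrow> ('v,'f) node \<Rightarrow> ('v,'f) node \<Rightarrow> bool"
  where
  "alt_edge S M x a b \<longleftrightarrow> adjB S a b \<and> (inM M a b \<longleftrightarrow> (isl b \<longleftrightarrow> isl x))"

lemma alt_edge_swap: "isl x \<longleftrightarrow> \<not> isl y \<Longrightarrow> alt_edge S M x a b \<longleftrightarrow> alt_edge S M y b a"
  unfolding alt_edge_def using adjB_isl adjB_sym inM_sym by metis

lemma adjB_path_isl_nth:
  assumes "\<And>j. Suc j < length p \<Longrightarrow> adjB S (p ! j) (p ! Suc j)" "i < length p"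
  shows "isl (p ! i) \<longleftrightarrow> (isl (p ! 0) \<longleftrightarrow> even i)"
  using assms(2)
proof (induction i)
  case (Suc i)
  then show ?case using adjB_isl[OF assms(1)] by simp
qed simp

lemma alt_path_iff:
  "alt_path S M p \<longleftrightarrow>
     p \<noteq> [] \<and> distinct p \<and> set p \<subseteq> Vp S \<and> successively (alt_edge S M (hd p)) p"
proof (cases "p = []")
  case False
  have "isl (p ! Suc i) \<longleftrightarrow> (isl (hd p) \<longleftrightarrow> odd i)"
    if "\<forall>j. Suc j < length p \<longrightarrow> adjB S (p ! j) (p ! Suc j)" "Suc i < length p" for i
    using adjB_path_isl_nth[of p S "Suc i"] that False by (simp add: hd_conv_nth)
  then show ?thesis
    unfolding alt_path_def successively_conv_nth alt_edge_def by blast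
qed (simp add: alt_path_def)

lemma alt_path_reach_neighbour:
  assumes mat: "matching S M" and p: "alt_path S M p" and free: "\<not> matched M (hd p)"
    and b: "b \<in> Vp S" "adjB S (last p) b" and side: "isl (last p) \<longleftrightarrow> isl (hd p)"
  shows "\<exists>p'. alt_path S M p' \<and> hd p' = hd p \<and> last p' = b"
proof (cases "b \<in> set p")
  case True
  then obtain xs ys where split: "p = xs @ b # ys" by (meson split_list)
  have "hd (xs @ [b]) = hd p" using split by (cases xs) auto
  moreover have "alt_path S M (xs @ [b])"
    using p split calculation unfolding alt_path_iff
    by (simp add: successively_append_iff[of _ "xs @ [b]" ys, simplified])
  ultimately show ?thesis by force
next
  case False
  have p_ne: "p \<noteq> []" and step: "successively (alt_edge S M (hd p)) p"
    using p by (auto simp: alt_path_iff)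
  have "\<not> inM M (last p) b"
  proof
    assume last_b: "inM M (last p) b"
    show False
    proof (cases "butlast p = []")
      case True
      then have "last p = hd p" using p_ne by (cases p) auto
      then show False using last_b free inM_imp_matched by metis
    next
      case False
      let ?a = "last (butlast p)"
      have "successively (alt_edge S M (hd p)) (butlast p @ [last p])"
        using step p_ne by simp
      then have "inM M ?a (last p)"
        using False side by (simp add: successively_append_iff alt_edge_def)
      then have "?a = b" using last_b inM_unique[OF mat] inM_sym by metis
      moreover have "?a \<in> set p" using False by (simp add: in_set_butlastD)
      ultimately show False using \<open>b \<notin> set p\<close> by simp
    qed
  qed
  then have "alt_edge S M (hd p) (last p) b"
    using b(2) side adjB_isl unfolding alt_edge_def by blast
  then have "alt_path S M (p @ [b])"
    using p False b(1) by (simp add: alt_path_iff successively_append_iff)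
  then show ?thesis using p_ne by auto
qed

lemma T_O_subset_Vp: "T_O S M \<subseteq> Vp S"
  unfolding T_O_def alt_path_iff by auto

lemma T_I_subset_Vp: "T_I S M \<subseteq> Vp S"
  unfolding T_I_def alt_path_iff by auto

lemma T_O_closed:
  assumes "matching S M" "Inr f \<in> T_O S M" "u \<in> vars S - exo S" "u \<in> scope S f"
  shows "Inl u \<in> T_O S M"
proof -
  obtain p f0 where p: "alt_path S M p" "f0 \<in> cons S" "\<not> matched M (Inr f0)"
      "hd p = Inr f0" "last p = Inr f"
    using assms(2) unfolding T_O_def by blast
  have "f \<in> cons S" using assms(2) T_O_subset_Vp by (auto simp: Vp_def)
  then have "adjB S (last p) (Inl u)" "Inl u \<in> Vp S"
    using assms(3,4) p(5) by (auto simp: adjB_def Vp_def)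
  then show ?thesis
    using alt_path_reach_neighbour[OF assms(1) p(1)] p unfolding T_O_def by fastforce
qed

lemma T_I_closed:
  assumes "matching S M" "Inl u \<in> T_I S M" "f \<in> cons S" "u \<in> scope S f"
  shows "Inr f \<in> T_I S M"
proof -
  obtain p u0 where p: "alt_path S M p" "u0 \<in> vars S - exo S" "\<not> matched M (Inl u0)"
      "hd p = Inl u0" "last p = Inl u"
    using assms(2) unfolding T_I_def by blast
  have "u \<in> vars S" using assms(2) T_I_subset_Vp by (auto simp: Vp_def)
  then have "adjB S (last p) (Inr f)" "Inr f \<in> Vp S"
    using assms(3,4) p(5) by (auto simp: adjB_def Vp_def)
  then show ?thesis
    using alt_path_reach_neighbour[OF assms(1) p(1)] p unfolding T_I_def by fastforce
qed

lemma inM_Inl_Inr: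
  "inM M (Inl u) (Inr f) \<longleftrightarrow> (f, u) \<in> M" "inM M (Inr f) (Inl u) \<longleftrightarrow> (f, u) \<in> M"
  by (auto simp: inM_def)

lemma successively_alt_edge_remove:
  assumes "successively (alt_edge S M x) p" "Inr f \<notin> set p" "isl x \<longleftrightarrow> isl y"
  shows "successively (alt_edge S (M - {(f, u)}) y) p"
  using assms(1)
proof (rule successively_mono)
  show "alt_edge S (M - {(f, u)}) y a b" if "a \<in> set p" "b \<in> set p" "alt_edge S M x a b" for a b
    using that assms(2,3) by (auto simp: alt_edge_def inM_def)
qed

(* Induction along the path: augment the tail after deleting its first matched edge (f, u1),
   then add the edge (f, u). *)
lemma augmenting_path_enlarges_matching:
  assumes "matching S M" "finite M" "distinct (Inl u # q)" "set (Inl u # q) \<subseteq> Vp S"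
    and "successively (alt_edge S M (Inl u)) (Inl u # q)"
    and "\<not> matched M (Inl u)" "\<not> isl (last (Inl u # q))" "\<not> matched M (last (Inl u # q))"
  shows "\<exists>M'. matching S M' \<and> finite M' \<and> card M' = Suc (card M) \<and>
           (\<forall>x. x \<notin> set (Inl u # q) \<longrightarrow> matched M' x \<longleftrightarrow> matched M x)"
  using assms
proof (induction q arbitrary: M u rule: induct_list012)
  case 1
  then show ?case by simp
next
  case (2 y)
  obtain f where y: "y = Inr f" using "2.prems"(7) by (cases y) auto
  have "adjB S (Inl u) (Inr f)" "u \<notin> exo S"
    using "2.prems"(4,5) y by (auto simp: alt_edge_def Vp_def)
  then have "matching S (insert (f, u) M)"
    using matching_insert "2.prems"(1,6,8) y by fastforce
  moreover have "(f, u) \<notin> M" using "2.prems"(6) by (auto simp: matched_def)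
  ultimately show ?case using "2.prems"(2) y by (auto simp: matched_insert)
next
  case (3 y z zs)
  obtain f where y: "y = Inr f"
    using "3.prems"(5) by (cases y) (auto simp: alt_edge_def dest: adjB_isl)
  obtain u1 where z: "z = Inl u1"
    using "3.prems"(5) y by (cases z) (auto simp: alt_edge_def dest: adjB_isl)
  have fu1: "(f, u1) \<in> M" using "3.prems"(5) y z by (simp add: alt_edge_def inM_Inl_Inr)
  have adj: "adjB S (Inl u) (Inr f)" using "3.prems"(5) y by (simp add: alt_edge_def)
  define M1 where "M1 = M - {(f, u1)}"
  have matched_M1: "matched M1 x \<longleftrightarrow> matched M x \<and> x \<noteq> Inl u1 \<and> x \<noteq> Inr f" for x
    using matched_remove[OF "3.prems"(1) fu1] by (simp add: M1_def)
  have tail_alt: "successively (alt_edge S M1 (Inl u1)) (Inl u1 # zs)"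
    unfolding M1_def using "3.prems"(3,5) y z by (intro successively_alt_edge_remove) auto
  have M1: "matching S M1" "finite M1"
    using "3.prems"(1,2) matching_remove by (auto simp: M1_def)
  have tail: "distinct (Inl u1 # zs)" "set (Inl u1 # zs) \<subseteq> Vp S"
    using "3.prems"(3,4) z by auto
  have tail_last: "last (Inl u1 # zs) = last (Inl u # y # z # zs)" using z by simp
  have tail_free: "\<not> matched M1 (Inl u1)" "\<not> matched M1 (last (Inl u1 # zs))"
    using "3.prems"(8) matched_M1 tail_last by auto
  obtain M1' where M1': "matching S M1'" "finite M1'" "card M1' = Suc (card M1)"
      "\<forall>x. x \<notin> set (Inl u1 # zs) \<longrightarrow> matched M1' x \<longleftrightarrow> matched M1 x"
    using "3.IH"(1)[OF M1 tail tail_alt tail_free(1) _ tail_free(2)] "3.prems"(7) tail_last by auto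
  have new: "\<not> matched M1' (Inl u)" "\<not> matched M1' (Inr f)"
    using M1'(4) "3.prems"(3,6) y z matched_M1 by auto
  have "u \<notin> exo S" using "3.prems"(4) by (auto simp: Vp_def)
  then have "matching S (insert (f, u) M1')" by (rule matching_insert[OF M1'(1) adj _ new])
  moreover have "(f, u) \<notin> M1'" using new(1) by (auto simp: matched_def)
  moreover have "card M1' = card M"
    using M1'(3) card_Suc_Diff1[OF "3.prems"(2) fu1] by (simp add: M1_def)
  ultimately show ?case
    using M1'(2,4) "3.prems"(3) y z matched_M1 by (auto simp: matched_insert)
qed

lemma max_matching_no_augmenting_path:
  assumes mm: "max_matching S M" and fin: "finite (cons S)" "finite (vars S)"
    and p: "alt_path S M p" "hd p = Inl u" "last p = Inr f"
    and free: "\<not> matched M (Inl u)" "\<not> matched M (Inr f)"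
  shows False
proof -
  have mat: "matching S M" using mm by (simp add: max_matching_def)
  obtain q where q: "p = Inl u # q" using p(1,2) by (cases p) (auto simp: alt_path_iff)
  have "distinct (Inl u # q)" "set (Inl u # q) \<subseteq> Vp S"
    "successively (alt_edge S M (Inl u)) (Inl u # q)"
    using p(1,2) q by (simp_all add: alt_path_iff)
  then obtain M' where "matching S M'" "card M' = Suc (card M)"
    using augmenting_path_enlarges_matching[OF mat matching_finite[OF mat fin]] p(3) free q
    by fastforce
  then show False using mm by (auto simp: max_matching_def)
qed

lemma T_I_T_O_disjoint:
  assumes mm: "max_matching S M" and fin: "finite (cons S)" "finite (vars S)"
  shows "T_I S M \<inter> T_O S M = {}"
proof (rule ccontr)
  assume "T_I S M \<inter> T_O S M \<noteq> {}"
  then obtain x where "x \<in> T_I S M" "x \<in> T_O S M" by blast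
  then obtain p1 u0 p2 f0 where
      p1: "alt_path S M p1" "\<not> matched M (Inl u0)" "hd p1 = Inl u0"
    and p2: "alt_path S M p2" "\<not> matched M (Inr f0)" "hd p2 = Inr f0"
    and meet: "last p1 = last p2"
    unfolding T_I_def T_O_def by auto
  have "\<exists>z\<in>set p1. z \<in> set p2" using p1(1) p2(1) meet by (metis alt_path_iff last_in_set)
  then obtain xs z zs
    where p1_split: "p1 = xs @ z # zs" "z \<in> set p2" "\<forall>y\<in>set xs. y \<notin> set p2"
    using split_list_first_prop[of p1 "\<lambda>y. y \<in> set p2"] by blast
  obtain ys ws where p2_split: "p2 = ys @ z # ws" using p1_split(2) by (meson split_list)
  \<comment> \<open>Follow p1 up to its first vertex z on p2, then return along p2 to its start.\<close>
  define q where "q = xs @ z # rev ys"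
  have hd_q: "hd q = Inl u0" using p1(3) p1_split(1) by (cases xs) (auto simp: q_def)
  have last_q: "last q = Inr f0"
    using p2(3) p2_split by (cases ys) (auto simp: q_def)
  have "successively (alt_edge S M (Inl u0)) (xs @ [z])"
    using p1(1,3) p1_split(1) by (auto simp: alt_path_iff successively_append_iff)
  moreover have "successively (alt_edge S M (Inr f0)) (ys @ [z])"
    using p2(1,3) p2_split by (auto simp: alt_path_iff successively_append_iff)
  then have "successively (alt_edge S M (Inl u0)) (rev (ys @ [z]))"
    unfolding successively_rev using alt_edge_swap[of "Inl u0" "Inr f0" S M] by simp
  then have "successively (alt_edge S M (Inl u0)) (z # rev ys)" by simp
  ultimately have "successively (alt_edge S M (Inl u0)) q"
    by (auto simp: q_def successively_append_iff)
  moreover have "distinct q" "set q \<subseteq> Vp S"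
    using p1(1) p2(1) p1_split p2_split by (auto simp: q_def alt_path_iff)
  ultimately have "alt_path S M q" using hd_q by (simp add: alt_path_iff q_def)
  then show False
    using max_matching_no_augmenting_path[OF mm fin _ hd_q last_q p1(2) p2(2)] by blast
qed

section \<open>Clusters of the causal ordering graph\<close>

lemma components_subset: "K \<in> components S T \<Longrightarrow> K \<subseteq> T"
proof
  fix y assume "K \<in> components S T" "y \<in> K"
  then obtain x where "(x, y) \<in> {(a, b). a \<in> T \<and> b \<in> T \<and> adjB S a b}\<^sup>*" "x \<in> T"
    unfolding components_def by blast
  then show "y \<in> T" by (induction rule: rtrancl_induct) auto
qed

lemma components_closed:
  assumes "K \<in> components S T" "a \<in> K" "b \<in> T" "adjB S a b"
  shows "b \<in> K"
proof -
  have "a \<in> T" using assms(1,2) components_subset by blast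
  then show ?thesis
    using assms unfolding components_def by (auto intro: rtrancl_into_rtrancl)
qed

lemma components_disjoint:
  assumes "K \<in> components S T" "K' \<in> components S T" "z \<in> K" "z \<in> K'"
  shows "K = K'"
proof -
  define E where "E = {(a, b). a \<in> T \<and> b \<in> T \<and> adjB S a b}"
  have "sym E" using adjB_sym by (auto simp: E_def sym_def)
  then have "sym (E\<^sup>*)" by (rule sym_rtrancl)
  obtain x x' where "K = {y. (x, y) \<in> E\<^sup>*}" "K' = {y. (x', y) \<in> E\<^sup>*}"
    using assms(1,2) unfolding components_def E_def by blast
  with assms(3,4) \<open>sym (E\<^sup>*)\<close> show ?thesis
    by (auto dest: symD intro: rtrancl_trans)
qed

lemma clusterOf_subset: "min_self_contained S R Fs \<Longrightarrow> clusterOf S R Fs \<subseteq> R"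
  by (auto simp: min_self_contained_def self_contained_def clusterOf_def nbrs_def)

lemma co_clusters_subset:
  "co_run S R rs \<Longrightarrow> C \<in> fst ` set (co_clusters S TC R rs) \<Longrightarrow> C \<subseteq> R"
  by (induction rs arbitrary: R) (auto dest: clusterOf_subset)

lemma co_clusters_disjoint:
  "co_run S R rs \<Longrightarrow> C \<in> fst ` set (co_clusters S TC R rs) \<Longrightarrow>
   D \<in> fst ` set (co_clusters S TC R rs) \<Longrightarrow> z \<in> C \<Longrightarrow> z \<in> D \<Longrightarrow> C = D"
proof (induction rs arbitrary: R)
  case (Cons Fs rest)
  let ?C = "clusterOf S R Fs"
  have "co_run S (R - ?C) rest" using Cons.prems(1) by simp
  then show ?case
    using Cons co_clusters_subset[of S "R - ?C" rest _ TC] by auto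
qed simp

lemma T_C_subset_Vp: "T_C S M \<subseteq> Vp S"
  by (auto simp: T_C_def)

lemma CO_clusters_cases:
  assumes run: "co_run S (T_C S M) run" and K: "K \<in> CO_clusters S M run" "z \<in> K"
  shows "K \<in> fst ` set (co_clusters S (T_C S M) (T_C S M) run) \<and> z \<in> T_C S M \<or>
    K \<in> components S (T_I S M) \<and> z \<in> T_I S M \<or>
    K \<in> components S (T_O S M) \<and> z \<in> T_O S M \<or>
    K \<in> (\<lambda>w. {Inl w}) ` exo S \<and> z \<in> Inl ` exo S"
proof -
  have "K \<in> fst ` set (co_clusters S (T_C S M) (T_C S M) run) \<or> K \<in> components S (T_I S M) \<or>
      K \<in> components S (T_O S M) \<or> K \<in> (\<lambda>w. {Inl w}) ` exo S"
    using K(1) unfolding CO_clusters_def by simp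
  then show ?thesis using K(2) co_clusters_subset[OF run] components_subset by blast
qed

lemma CO_clusters_disjoint:
  assumes mm: "max_matching S M" and fin: "finite (cons S)" "finite (vars S)"
    and run: "co_run S (T_C S M) run"
    and CD: "C \<in> CO_clusters S M run" "D \<in> CO_clusters S M run" and z: "z \<in> C" "z \<in> D"
  shows "C = D"
proof -
  let ?run_clusters = "fst ` set (co_clusters S (T_C S M) (T_C S M) run)"
  have "T_I S M \<inter> T_O S M = {}" using T_I_T_O_disjoint[OF mm fin] .
  moreover have "Vp S \<inter> Inl ` exo S = {}" by (auto simp: Vp_def)
  ultimately have exclusive:
      "z \<in> T_C S M \<Longrightarrow> z \<notin> T_I S M \<and> z \<notin> T_O S M \<and> z \<notin> Inl ` exo S"
      "z \<in> T_I S M \<Longrightarrow> z \<notin> T_O S M \<and> z \<notin> Inl ` exo S"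
      "z \<in> T_O S M \<Longrightarrow> z \<notin> Inl ` exo S"
    using T_I_subset_Vp[of S M] T_O_subset_Vp[of S M] unfolding T_C_def by blast+
  note D_region = CO_clusters_cases[OF run CD(2) z(2)]
  from CO_clusters_cases[OF run CD(1) z(1)] show ?thesis
  proof (elim disjE conjE)
    assume C: "C \<in> ?run_clusters" and "z \<in> T_C S M"
    then have "D \<in> ?run_clusters" using D_region exclusive by blast
    then show ?thesis by (rule co_clusters_disjoint[OF run C _ z])
  next
    assume C: "C \<in> components S (T_I S M)" and "z \<in> T_I S M"
    then have "D \<in> components S (T_I S M)" using D_region exclusive by blast
    then show ?thesis by (rule components_disjoint[OF C _ z])
  next
    assume C: "C \<in> components S (T_O S M)" and "z \<in> T_O S M"
    then have "D \<in> components S (T_O S M)" using D_region exclusive by blast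
    then show ?thesis by (rule components_disjoint[OF C _ z])
  next
    assume "C \<in> (\<lambda>w. {Inl w}) ` exo S" and "z \<in> Inl ` exo S"
    moreover have "D \<in> (\<lambda>w. {Inl w}) ` exo S"
      using D_region exclusive calculation(2) by blast
    ultimately show ?thesis using z by blast
  qed
qed

lemma dpath_same_cluster:
  "C \<in> CO_clusters S M run \<Longrightarrow> x \<in> C \<Longrightarrow> y \<in> C \<Longrightarrow> dpath S M run x y"
  unfolding dpath_def by blast

lemma dpath_edge:
  assumes "dpath S M run x z" "(z, C) \<in> CO_edges S M run" "C \<in> CO_clusters S M run" "y \<in> C"
  shows "dpath S M run x y"
  using assms unfolding dpath_def by (blast intro: rtrancl_into_rtrancl)

lemma T_O_component_inputs_exo:
  assumes mat: "matching S M" and C: "C \<in> components S (T_O S M)"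
    and f: "Inr f \<in> C" "u \<in> scope S f" and u: "u \<in> vars S" "Inl u \<notin> C"
  shows "u \<in> exo S"
proof (rule ccontr)
  assume "u \<notin> exo S"
  have f_TO: "Inr f \<in> T_O S M" using C f(1) components_subset by blast
  then have "f \<in> cons S" using T_O_subset_Vp by (auto simp: Vp_def)
  then have "adjB S (Inr f) (Inl u)" using f(2) u(1) by (auto simp: adjB_def)
  moreover have "Inl u \<in> T_O S M" using T_O_closed[OF mat f_TO] f(2) u(1) \<open>u \<notin> exo S\<close> by blast
  ultimately show False using components_closed[OF C f(1)] u(2) by blast
qed

lemma run_cluster_input:
  assumes mat: "matching S M" and R: "R \<subseteq> T_C S M"
    and step: "(clusterOf S R Fs, nbrs S (T_C S M) (Inr ` Fs) - nbrs S R (Inr ` Fs))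
                 \<in> set (co_clusters S (T_C S M) (T_C S M) run)"
    and msc: "min_self_contained S R Fs"
    and f: "Inr f \<in> clusterOf S R Fs" "u \<in> scope S f"
    and u: "u \<in> vars S - exo S" "Inl u \<notin> clusterOf S R Fs"
  shows "(Inl u \<in> T_O S M \<or> Inl u \<in> T_C S M - R) \<and>
    (Inl u, clusterOf S R Fs) \<in> CO_edges S M run"
proof -
  let ?C = "clusterOf S R Fs"
  have C: "?C \<in> CO_clusters S M run" using step unfolding CO_clusters_def by force
  have fFs: "f \<in> Fs" using f(1) by (auto simp: clusterOf_def nbrs_def adjB_def)
  have f_TC: "Inr f \<in> T_C S M" using f(1) clusterOf_subset[OF msc] R by blast
  then have fc: "f \<in> cons S" by (auto simp: T_C_def Vp_def)
  then have adj: "adjB S (Inl u) (Inr f)" "adjB S (Inr f) (Inl u)"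
    using f(2) u(1) by (auto simp: adjB_def)
  have "Inl u \<notin> T_I S M" using T_I_closed[OF mat _ fc f(2)] f_TC by (auto simp: T_C_def)
  moreover have "Inl u \<in> Vp S" using u(1) by (simp add: Vp_def)
  ultimately consider "Inl u \<in> T_O S M" | "Inl u \<in> T_C S M" by (auto simp: T_C_def)
  then show ?thesis
  proof cases
    case 1
    then show ?thesis using C f(1) adj(1) f_TC unfolding CO_edges_def by blast
  next
    case 2
    have "Inl u \<notin> R"
      using u(2) adj(2) fFs unfolding clusterOf_def nbrs_def by blast
    then have "Inl u \<in> nbrs S (T_C S M) (Inr ` Fs) - nbrs S R (Inr ` Fs)"
      using 2 adj(2) fFs unfolding nbrs_def by blast
    then show ?thesis using step 2 \<open>Inl u \<notin> R\<close> unfolding CO_edges_def by blast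
  qed
qed

section \<open>Solutions and unique solvability\<close>

lemma solvec_do_sys: "solvec (do_sys S SF \<sigma> \<xi>) = solvec S"
  by (simp add: do_sys_def solvec_def fun_eq_iff)

lemma do_sys_solution_solves_unintervened:
  assumes "is_solution (do_sys S SF \<sigma> \<xi>) P X g"
  shows "g \<in> PiM (exo S) (xsp S) \<rightarrow>\<^sub>M PiM (vars S - exo S) (xsp S)"
    and "AE \<omega> in P. \<forall>f\<in>cons S - SF. phi S f (restrict (solvec S X g \<omega>) (scope S f)) = cst S f"
proof -
  let ?T = "do_sys S SF \<sigma> \<xi>"
  have same: "exo ?T = exo S" "vars ?T = vars S" "xsp ?T = xsp S" "cons ?T = cons S"
    and unintervened:
      "f \<notin> SF \<Longrightarrow> phi ?T f = phi S f \<and> scope ?T f = scope S f \<and> cst ?T f = cst S f"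
    for f by (simp_all add: do_sys_def)
  show "g \<in> PiM (exo S) (xsp S) \<rightarrow>\<^sub>M PiM (vars S - exo S) (xsp S)"
    using assms same by (simp add: is_solution_def)
  have "AE \<omega> in P. \<forall>f\<in>cons S. phi ?T f (restrict (solvec S X g \<omega>) (scope ?T f)) = cst ?T f"
    using assms same by (simp add: is_solution_def solvec_do_sys)
  then show "AE \<omega> in P. \<forall>f\<in>cons S - SF.
      phi S f (restrict (solvec S X g \<omega>) (scope S f)) = cst S f"
    by (rule eventually_mono) (use unintervened in auto)
qed

lemma solvec_restrict_in_space:
  assumes wf: "wf_csys S P X"
    and h: "h \<in> PiM (exo S) (xsp S) \<rightarrow>\<^sub>M PiM (vars S - exo S) (xsp S)"
    and \<omega>: "\<omega> \<in> space P" and A: "A \<subseteq> vars S"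
  shows "restrict (solvec S X h \<omega>) (A - exo S) \<in> space (PiM (A - exo S) (xsp S))"
proof -
  have "(\<lambda>w\<in>exo S. X w \<omega>) \<in> space (PiM (exo S) (xsp S))"
    using wf \<omega> by (auto simp: wf_csys_def space_PiM intro: measurable_space)
  then have "h (\<lambda>w\<in>exo S. X w \<omega>) \<in> space (PiM (vars S - exo S) (xsp S))"
    by (rule measurable_space[OF h])
  then have "\<forall>u\<in>A - exo S. solvec S X h \<omega> u \<in> space (xsp S u)"
    using A by (auto simp: space_PiM solvec_def)
  then show ?thesis by (simp add: space_PiM restrict_PiE_iff)
qed

lemma solv_cond_solvec:
  assumes "VS S Fs \<union> Vs \<subseteq> vars S" "Vs \<inter> exo S = {}"
  shows "solv_cond S X Fs Vs gC \<omega> (restrict (solvec S X h \<omega>) ((VS S Fs \<union> Vs) - exo S)) =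
     (restrict (solvec S X h \<omega>) Vs = gC (restrict (solvec S X h \<omega>) (VS S Fs - Vs)),
      \<forall>f\<in>Fs. phi S f (restrict (solvec S X h \<omega>) (scope S f)) = cst S f)"
proof -
  let ?x = "restrict (solvec S X h \<omega>) ((VS S Fs \<union> Vs) - exo S)"
  have merge: "restrict (mergeX S X \<omega> ?x) B = restrict (solvec S X h \<omega>) B"
    if "B \<subseteq> VS S Fs \<union> Vs" for B
    using that assms(1) by (auto simp: restrict_def mergeX_def solvec_def fun_eq_iff)
  have "restrict ?x Vs = restrict (solvec S X h \<omega>) Vs"
    using assms(2) by (auto simp: restrict_def fun_eq_iff)
  moreover have "scope S f \<subseteq> VS S Fs \<union> Vs" if "f \<in> Fs" for f
    using that by (auto simp: VS_def)
  moreover have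
    "restrict (mergeX S X \<omega> ?x) (VS S Fs - Vs) = restrict (solvec S X h \<omega>) (VS S Fs - Vs)"
    by (rule merge) blast
  ultimately show ?thesis by (simp add: solv_cond_def merge)
qed

lemma solv_cond_equiv_determines_solvec:
  assumes wf: "wf_csys S P X" and A: "VS S Fs \<union> Vs \<subseteq> vars S" "Vs \<inter> exo S = {}"
    and equiv: "\<forall>x\<in>space (PiM ((VS S Fs \<union> Vs) - exo S) (xsp S)).
        fst (solv_cond S X Fs Vs gC \<omega> x) \<longleftrightarrow> snd (solv_cond S X Fs Vs gC \<omega> x)"
    and h: "h \<in> PiM (exo S) (xsp S) \<rightarrow>\<^sub>M PiM (vars S - exo S) (xsp S)" and \<omega>: "\<omega> \<in> space P"
    and sat: "\<forall>f\<in>Fs. phi S f (restrict (solvec S X h \<omega>) (scope S f)) = cst S f"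
  shows "restrict (solvec S X h \<omega>) Vs = gC (restrict (solvec S X h \<omega>) (VS S Fs - Vs))"
proof -
  let ?x = "restrict (solvec S X h \<omega>) ((VS S Fs \<union> Vs) - exo S)"
  have "snd (solv_cond S X Fs Vs gC \<omega> ?x)" using sat by (simp add: solv_cond_solvec[OF A])
  then have "fst (solv_cond S X Fs Vs gC \<omega> ?x)"
    using equiv solvec_restrict_in_space[OF wf h \<omega> A(1)] by blast
  then show ?thesis by (simp add: solv_cond_solvec[OF A])
qed

lemma uniquely_solvable_solutions_agree:
  assumes wf: "wf_csys S P X" and us: "uniquely_solvable S P X Fs Vs"
    and Fs: "Fs \<subseteq> cons S" and Vs: "Vs \<subseteq> vars S - exo S"
    and g: "g1 \<in> PiM (exo S) (xsp S) \<rightarrow>\<^sub>M PiM (vars S - exo S) (xsp S)"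
      "g2 \<in> PiM (exo S) (xsp S) \<rightarrow>\<^sub>M PiM (vars S - exo S) (xsp S)"
    and sat: "AE \<omega> in P. \<forall>f\<in>Fs. phi S f (restrict (solvec S X g1 \<omega>) (scope S f)) = cst S f"
      "AE \<omega> in P. \<forall>f\<in>Fs. phi S f (restrict (solvec S X g2 \<omega>) (scope S f)) = cst S f"
  shows "AE \<omega> in P. (\<forall>u\<in>VS S Fs - Vs. solvec S X g1 \<omega> u = solvec S X g2 \<omega> u) \<longrightarrow>
                    (\<forall>u\<in>Vs. solvec S X g1 \<omega> u = solvec S X g2 \<omega> u)"
proof -
  obtain gC where gC: "AE \<omega> in P. \<forall>x\<in>space (PiM ((VS S Fs \<union> Vs) - exo S) (xsp S)).
        fst (solv_cond S X Fs Vs gC \<omega> x) \<longleftrightarrow> snd (solv_cond S X Fs Vs gC \<omega> x)"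
    using us unfolding uniquely_solvable_def by blast
  have A: "VS S Fs \<union> Vs \<subseteq> vars S" "Vs \<inter> exo S = {}"
    using wf Fs Vs by (auto simp: wf_csys_def VS_def)
  show ?thesis
    using gC sat AE_space
  proof eventually_elim
    case (elim \<omega>)
    note determined = solv_cond_equiv_determines_solvec[OF wf A elim(1) _ elim(4)]
    show ?case
    proof (intro impI ballI)
      fix u assume inputs: "\<forall>u\<in>VS S Fs - Vs. solvec S X g1 \<omega> u = solvec S X g2 \<omega> u"
        and "u \<in> Vs"
      have "restrict (solvec S X g1 \<omega>) (VS S Fs - Vs) = restrict (solvec S X g2 \<omega>) (VS S Fs - Vs)"
        using inputs by (intro restrict_ext) simp
      then have "restrict (solvec S X g1 \<omega>) Vs = restrict (solvec S X g2 \<omega>) Vs"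
        using determined[OF g(1) elim(2)] determined[OF g(2) elim(3)] by simp
      then have "restrict (solvec S X g1 \<omega>) Vs u = restrict (solvec S X g2 \<omega>) Vs u"
        by (rule fun_cong)
      with \<open>u \<in> Vs\<close> show "solvec S X g1 \<omega> u = solvec S X g2 \<omega> u" by simp
    qed
  qed
qed

section \<open>Agreement of the two solutions\<close>

locale intervened_system =
  fixes S :: "('v, 'f, 'a) csys" and P :: "'o measure" and X :: "'v \<Rightarrow> 'o \<Rightarrow> 'a"
    and M :: "('f \<times> 'v) set" and run :: "'f set list"
    and g g' :: "('v \<Rightarrow> 'a) \<Rightarrow> ('v \<Rightarrow> 'a)"
    and SF :: "'f set" and SV :: "'v set" and \<sigma> :: "'f \<Rightarrow> 'v" and \<xi> :: "'v \<Rightarrow> 'a"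
  assumes wf: "wf_csys S P X"
    and mm: "max_matching S M"
    and run: "co_run S (T_C S M) run"
    and mus: "max_uniquely_solvable S P X M run"
    and sol: "is_solution S P X g"
    and sol': "is_solution (do_sys S SF \<sigma> \<xi>) P X g'"
    and intervened_cluster: "Inr ` SF \<union> Inl ` SV \<in> CO_clusters S M run"
    and \<sigma>: "\<sigma> ` SF \<subseteq> SV"
begin

abbreviation agrees :: "'v \<Rightarrow> bool" where
  "agrees u \<equiv> AE \<omega> in P. solvec S X g \<omega> u = solvec S X g' \<omega> u"

abbreviation unreachable :: "'v \<Rightarrow> bool" where
  "unreachable u \<equiv> \<forall>x\<in>SV. \<not> dpath S M run (Inl x) (Inl u)"

lemma finite_system: "finite (cons S)" "finite (vars S)"
  using wf by (simp_all add: wf_csys_def)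

lemma agrees_exo: "u \<in> exo S \<Longrightarrow> agrees u"
  by (simp add: solvec_def)

lemma unreachable_edge_source:
  assumes "unreachable u" "Inl u \<in> C" "C \<in> CO_clusters S M run"
    and "(Inl u', C) \<in> CO_edges S M run"
  shows "unreachable u'"
  using assms dpath_edge by blast

lemma unreachable_cluster_unintervened:
  assumes C: "C \<in> CO_clusters S M run" and u: "Inl u \<in> C" "unreachable u" and f: "f \<in> SF"
  shows "Inr f \<notin> C"
proof
  assume "Inr f \<in> C"
  moreover have "Inr f \<in> Inr ` SF \<union> Inl ` SV" using f by blast
  ultimately have "C = Inr ` SF \<union> Inl ` SV"
    by (rule CO_clusters_disjoint[OF mm finite_system run C intervened_cluster])
  then have "Inl (\<sigma> f) \<in> C" using f \<sigma> by blast
  then have "dpath S M run (Inl (\<sigma> f)) (Inl u)" using dpath_same_cluster[OF C _ u(1)] by blast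
  then show False using u(2) f \<sigma> by blast
qed

lemma cluster_agrees:
  assumes C: "C \<in> CO_clusters S M run" "C \<subseteq> T_C S M \<union> T_O S M"
    and u: "Inl u \<in> C" "unreachable u"
    and inputs: "\<And>u'. u' \<in> VS S {f. Inr f \<in> C} - {u. Inl u \<in> C} \<Longrightarrow> agrees u'"
  shows "agrees u"
proof -
  let ?Fs = "{f. Inr f \<in> C}" and ?Vs = "{u. Inl u \<in> C}"
  have C_Vp: "C \<subseteq> Vp S" using C(2) T_C_subset_Vp T_O_subset_Vp by blast
  then have Fs: "?Fs \<subseteq> cons S - SF" and Vs: "?Vs \<subseteq> vars S - exo S"
    using unreachable_cluster_unintervened[OF C(1) u] by (auto simp: Vp_def)
  have "C \<inter> Inl ` exo S = {}" using C_Vp by (auto simp: Vp_def)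
  moreover have "C \<inter> T_I S M = {}"
    using C(2) T_I_T_O_disjoint[OF mm finite_system] by (auto simp: T_C_def)
  ultimately have us: "uniquely_solvable S P X ?Fs ?Vs"
    using mus C(1) by (simp add: max_uniquely_solvable_def)
  have sat: "AE \<omega> in P. \<forall>f\<in>?Fs. phi S f (restrict (solvec S X g \<omega>) (scope S f)) = cst S f"
    using sol Fs by (auto simp: is_solution_def elim!: eventually_mono)
  have sat': "AE \<omega> in P. \<forall>f\<in>?Fs. phi S f (restrict (solvec S X g' \<omega>) (scope S f)) = cst S f"
    using do_sys_solution_solves_unintervened(2)[OF sol'] Fs by (auto elim!: eventually_mono)
  have "g \<in> PiM (exo S) (xsp S) \<rightarrow>\<^sub>M PiM (vars S - exo S) (xsp S)"
    using sol by (simp add: is_solution_def)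
  from uniquely_solvable_solutions_agree[OF wf us _ Vs this
      do_sys_solution_solves_unintervened(1)[OF sol'] sat sat'] Fs
  have determined: "AE \<omega> in P.
      (\<forall>u'\<in>VS S ?Fs - ?Vs. solvec S X g \<omega> u' = solvec S X g' \<omega> u') \<longrightarrow>
      (\<forall>u'\<in>?Vs. solvec S X g \<omega> u' = solvec S X g' \<omega> u')"
    by blast
  have "VS S ?Fs \<subseteq> vars S" using wf Fs by (auto simp: wf_csys_def VS_def)
  then have "finite (VS S ?Fs - ?Vs)" using finite_system(2) by (blast intro: finite_subset)
  then have "AE \<omega> in P. \<forall>u'\<in>VS S ?Fs - ?Vs. solvec S X g \<omega> u' = solvec S X g' \<omega> u'"
    using inputs by (simp add: AE_finite_all)
  with determined have "AE \<omega> in P. \<forall>u'\<in>?Vs. solvec S X g \<omega> u' = solvec S X g' \<omega> u'"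
    by eventually_elim blast
  then show "agrees u" by (rule eventually_mono) (use u(1) in blast)
qed

lemma agrees_on_T_O:
  assumes u: "Inl u \<in> T_O S M" "unreachable u"
  shows "agrees u"
proof -
  define C where "C = {y. (Inl u, y) \<in> {(a, b). a \<in> T_O S M \<and> b \<in> T_O S M \<and> adjB S a b}\<^sup>*}"
  have C: "C \<in> components S (T_O S M)" using u(1) unfolding components_def C_def by blast
  show ?thesis
  proof (rule cluster_agrees)
    show "C \<in> CO_clusters S M run" using C by (simp add: CO_clusters_def)
    show "C \<subseteq> T_C S M \<union> T_O S M" using components_subset[OF C] by blast
    show "Inl u \<in> C" by (simp add: C_def)
    show "agrees u'" if input: "u' \<in> VS S {f. Inr f \<in> C} - {u. Inl u \<in> C}" for u'
    proof -
      obtain f where f: "Inr f \<in> C" "u' \<in> scope S f" "Inl u' \<notin> C"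
        using input by (auto simp: VS_def)
      have "f \<in> cons S" using f(1) components_subset[OF C] T_O_subset_Vp by (auto simp: Vp_def)
      then have "u' \<in> vars S" using wf f(2) by (auto simp: wf_csys_def)
      then show ?thesis
        using T_O_component_inputs_exo[OF _ C f(1,2) _ f(3)] mm agrees_exo
        by (simp add: max_matching_def)
    qed
  qed (rule u(2))
qed

lemma run_cluster_agrees:
  assumes R: "R \<subseteq> T_C S M" and msc: "min_self_contained S R Fs"
    and step: "(clusterOf S R Fs, nbrs S (T_C S M) (Inr ` Fs) - nbrs S R (Inr ` Fs))
                 \<in> set (co_clusters S (T_C S M) (T_C S M) run)"
    and earlier: "\<And>u. Inl u \<in> T_C S M - R \<Longrightarrow> unreachable u \<Longrightarrow> agrees u"
    and u: "Inl u \<in> clusterOf S R Fs" "unreachable u"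
  shows "agrees u"
proof -
  let ?C = "clusterOf S R Fs"
  have C: "?C \<in> CO_clusters S M run" using step unfolding CO_clusters_def by force
  have C_TC: "?C \<subseteq> T_C S M" using clusterOf_subset[OF msc] R by blast
  show ?thesis
  proof (rule cluster_agrees[OF C _ u])
    show "?C \<subseteq> T_C S M \<union> T_O S M" using C_TC by blast
    show "agrees u'" if input: "u' \<in> VS S {f. Inr f \<in> ?C} - {u. Inl u \<in> ?C}" for u'
    proof (cases "u' \<in> exo S")
      case False
      obtain f where f: "Inr f \<in> ?C" "u' \<in> scope S f" "Inl u' \<notin> ?C"
        using input by (auto simp: VS_def)
      have "f \<in> cons S" using f(1) C_TC by (auto simp: T_C_def Vp_def)
      then have "u' \<in> vars S - exo S" using wf f(2) False by (auto simp: wf_csys_def)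
      then have "(Inl u' \<in> T_O S M \<or> Inl u' \<in> T_C S M - R) \<and> (Inl u', ?C) \<in> CO_edges S M run"
        using run_cluster_input[OF _ R step msc f(1,2) _ f(3)] mm
        by (simp add: max_matching_def)
      moreover have "unreachable u'"
        using calculation unreachable_edge_source[OF u(2,1) C] by blast
      ultimately show ?thesis using agrees_on_T_O earlier by blast
    qed (rule agrees_exo)
  qed
qed

lemma agrees_on_run_clusters:
  assumes "co_run S R rs" "R \<subseteq> T_C S M"
    and "set (co_clusters S (T_C S M) R rs) \<subseteq> set (co_clusters S (T_C S M) (T_C S M) run)"
    and "\<And>u. Inl u \<in> T_C S M - R \<Longrightarrow> unreachable u \<Longrightarrow> agrees u"
    and "Inl u \<in> T_C S M" "unreachable u"
  shows "agrees u"
  using assms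
proof (induction rs arbitrary: R)
  case Nil
  then show ?case by simp
next
  case (Cons Fs rest)
  let ?C = "clusterOf S R Fs"
  have msc: "min_self_contained S R Fs" and rest: "co_run S (R - ?C) rest"
    using Cons.prems(1) by auto
  show ?case
  proof (rule Cons.IH[OF rest])
    show "R - ?C \<subseteq> T_C S M" using Cons.prems(2) by blast
    show "set (co_clusters S (T_C S M) (R - ?C) rest)
        \<subseteq> set (co_clusters S (T_C S M) (T_C S M) run)"
      using Cons.prems(3) by simp
    show "agrees u'" if "Inl u' \<in> T_C S M - (R - ?C)" "unreachable u'" for u'
      using that Cons.prems(2-4) run_cluster_agrees[OF _ msc] by auto
  qed (use Cons.prems(5,6) in auto)
qed

theorem agrees_if_unreachable:
  assumes "Inl v \<in> T_C S M \<union> T_O S M" "unreachable v"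
  shows "agrees v"
  using assms agrees_on_T_O agrees_on_run_clusters[OF run subset_refl subset_refl] by blast

end

theorem theorem23:
  fixes S :: "('v, 'f, 'a) csys" and P :: "'o measure" and X :: "'v \<Rightarrow> 'o \<Rightarrow> 'a"
    and M :: "('f \<times> 'v) set" and run :: "'f set list"
    and g g' :: "('v \<Rightarrow> 'a) \<Rightarrow> ('v \<Rightarrow> 'a)"
    and SF :: "'f set" and SV :: "'v set" and \<sigma> :: "'f \<Rightarrow> 'v" and \<xi> :: "'v \<Rightarrow> 'a" and v :: 'v
  assumes wf: "wf_csys S P X"
    and mm: "max_matching S M"
    and run: "co_run S (T_C S M) run"
    and mus: "max_uniquely_solvable S P X M run"
    and sol: "is_solution S P X g"
    and SF: "SF \<subseteq> {f \<in> cons S. Inr f \<in> T_C S M \<union> T_O S M}"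
    and SV: "SV \<subseteq> {u \<in> vars S - exo S. Inl u \<in> T_C S M \<union> T_O S M}"
    and cl: "Inr ` SF \<union> Inl ` SV \<in> CO_clusters S M run"
    and enum: "bij_betw \<sigma> SF SV"
    and xi: "\<forall>u\<in>SV. \<xi> u \<in> space (xsp S u)"
    and sol': "is_solution (do_sys S SF \<sigma> \<xi>) P X g'"
    and v: "v \<in> vars S" "Inl v \<in> T_C S M \<union> T_O S M"
    and nopath: "\<forall>x\<in>SV. \<not> dpath S M run (Inl x) (Inl v)"
  shows "AE \<omega> in P. solvec S X g \<omega> v = solvec (do_sys S SF \<sigma> \<xi>) X g' \<omega> v"
proof -
  interpret intervened_system S P X M run g g' SF SV \<sigma> \<xi>
    using wf mm run mus sol sol' cl enum by unfold_locales (auto simp: bij_betw_def)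
  have "agrees v" using agrees_if_unreachable v(2) nopath by blast
  then show ?thesis by (simp add: solvec_do_sys)
qed

end
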